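(* Let $n\ge 3000$. Consider a one-dimensional stochastic convex optimization problem with i.i.d. samples $S_1,\dots,S_{2n}$, where $f_1,\dots,f_n$ (with $f_i=f(\cdot;S_i)$) form the validation set and $f_{n+1},\dots,f_{2n}$ the training set. For learning rates $\eta_0,\eta_1,\dots,\eta_K>0$ let $x_k=\mathrm{AdaSGD}(\eta_k)$ and $k_{\mathrm{greedy}}\in\arg\min_{k\in\{0,\dots,K\}}\frac1n\sum_{i=1}^n f_i(x_k)$. Then there exists a stochastic convex optimization problem (a distribution of $S$ and a function $f(x;S)$ convex and $1$-Lipschitz in $x$) whose population risk $F(x)=\mathbb{E}[f(x;S)]$ is minimized at the origin, such that with probability at least $1/1000$, \[ F(x_{k_{\mathrm{greedy}}})-F^\star\ge \frac{1}{288\sqrt n}\max_{k\in\{0,\dots,K\}}\eta_k, \] where $F^\star=\inf_x F(x)$.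
   Context: $\mathrm{AdaSGD}(R)$ (adaptive SGD with learning rate $R>0$) is defined as follows: $u_1=0$, and for $t=1,\dots,n$, $u_{t+1}=\mathrm{proj}_R\Big(u_t-R\,\frac{g_t}{\sqrt{\sum_{j=1}^t\|g_j\|_2^2}}\Big)$ where $g_t$ is a (sub)gradient of $f_{n+t}$ at $u_t$ and $\mathrm{proj}_R(\hat u)=\arg\min_{u\in\mathcal{X}:\|u\|_2\le R}\|u-\hat u\|_2$; the output is $\mathrm{AdaSGD}(R)=\bar u_n=\frac1n\sum_{j=1}^n u_j$. Thus AdaSGD only uses the training samples $f_{n+1},\dots,f_{2n}$. *)

theory Defs
  imports "HOL-Probability.Probability"
begin

definition proj_ball :: "real \<Rightarrow> real \<Rightarrow> real" where
  "proj_ball R v = max (- R) (min R v)"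

text \<open>State of AdaSGD(R) after t steps: (u_{t+1}, sum_{j<=t} g_j^2).
  Here gr x s is a subgradient of f(.;s) at x and T t = S_{n+t} is the t-th
  training sample (t >= 1).\<close>
fun ada_state :: "(real \<Rightarrow> real \<Rightarrow> real) \<Rightarrow> real \<Rightarrow> (nat \<Rightarrow> real) \<Rightarrow> nat \<Rightarrow> real \<times> real" where
  "ada_state gr R T 0 = (0, 0)"
| "ada_state gr R T (Suc t) =
     (let u = fst (ada_state gr R T t);
          gt = gr u (T (Suc t));
          G = snd (ada_state gr R T t) + gt\<^sup>2
      in (proj_ball R (u - R * gt / sqrt G), G))"

definition adasgd :: "nat \<Rightarrow> (real \<Rightarrow> real \<Rightarrow> real) \<Rightarrow> real \<Rightarrow> (nat \<Rightarrow> real) \<Rightarrow> real" where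
  "adasgd n gr R S = (\<Sum>t<n. fst (ada_state gr R (\<lambda>t. S (n + t)) t)) / real n"

definition val_risk :: "nat \<Rightarrow> (real \<Rightarrow> real \<Rightarrow> real) \<Rightarrow> (nat \<Rightarrow> real) \<Rightarrow> real \<Rightarrow> real" where
  "val_risk n f S x = (\<Sum>i=1..n. f x (S i)) / real n"

definition pop_risk :: "real measure \<Rightarrow> (real \<Rightarrow> real \<Rightarrow> real) \<Rightarrow> real \<Rightarrow> real" where
  "pop_risk D f x = (\<integral>s. f x s \<partial>D)"

end

(*
  The instance draws s in {0, 1} with P(s = 1) = (1 - eps)/2, eps = 1/(10 sqrt n), and takes
  f(x; 1) = -x and f(x; 0) = |x|, so that F(x) = eps x for x >= 0 and F(x) = -x for x < 0.
  Subgradients of this family are invariant under positive scaling of x, hence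
  AdaSGD(eta) = eta c with c = AdaSGD(1).  If the validation samples contain a majority of ones,
  the validation risk is negative on the positive half-line, so the greedy rule selects the
  largest eta and the excess risk is eps c max eta.  The majority occurs with probability at
  least 3/35 (binomial law), independently c >= 5/144 with probability at least 1/16 (reverse
  Markov, as c <= 1 and E c >= 7/72), and 3/35 * 1/16 >= 1/1000.

  The bound E c >= 7/72 is a drift argument for the state (u, G) = (u_t, sum of g_j^2) of
  AdaSGD(1): the potential G psi(u) + 8 min G 81 grows in expectation by at least 1 - 12/5 u_t
  per step, while it never exceeds 11/20 n + 650.
*)
theory Submission
  imports Defs
begin

section \<open>A potential for AdaSGD with unit learning rate\<close>

definition psi :: "real \<Rightarrow> real" where
  "psi u = 3/10 * u + 21/20 * u^2 - 4/5 * u^3"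

fun ada_step :: "real \<times> real \<Rightarrow> real \<Rightarrow> real \<times> real" where
  "ada_step (u, G) g = (proj_ball 1 (u - g / sqrt (G + g^2)), G + g^2)"

text \<open>The term \<open>8 * min G 81\<close> pays for the regime \<open>G < 80\<close>, in which the drift of
  \<open>G * psi u\<close> alone may be negative.\<close>
fun potential :: "real \<times> real \<Rightarrow> real" where
  "potential (u, G) = G * psi u + 8 * min G 81"

text \<open>Negative iterates stay within one step length \<open>1 / sqrt G\<close> of the origin.\<close>
fun ada_invariant :: "real \<times> real \<Rightarrow> bool" where
  "ada_invariant (u, G) \<longleftrightarrow> 0 \<le> G \<and> -1 \<le> u \<and> u \<le> 1 \<and> (u < 0 \<longrightarrow> G * u^2 \<le> 1)"

lemma psi_le_psi_one: "1 \<le> x \<Longrightarrow> psi x \<le> psi 1"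
proof -
  assume "1 \<le> x"
  define w where "w = x - 1"
  have "0 \<le> w^2" "0 \<le> w^3" using \<open>1 \<le> x\<close> by (simp_all add: w_def)
  moreover have "psi x - psi 1 = - 27/20 * w^2 - 4/5 * w^3"
    unfolding psi_def w_def by (simp add: field_simps power2_eq_square power3_eq_cube)
  ultimately show ?thesis by linarith
qed

lemma psi_mono_unit:
  assumes "0 \<le> a" "a \<le> b" "b \<le> 1"
  shows "psi a \<le> psi b"
proof -
  have "a^2 \<le> a" "b^2 \<le> b" "a * b \<le> a"
    using assms by (simp_all add: power2_eq_square mult_left_le_one_le mult_right_le_one_le)
  then have "0 \<le> 3/10 + 21/20 * a + 21/20 * b - 4/5 * a^2 - 4/5 * (a * b) - 4/5 * b^2"
    using assms by linarith
  then have "0 \<le> (b - a) * (3/10 + 21/20 * a + 21/20 * b - 4/5 * a^2 - 4/5 * (a * b) - 4/5 * b^2)"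
    using assms by simp
  also have "\<dots> = psi b - psi a"
    unfolding psi_def by (simp add: field_simps power2_eq_square power3_eq_cube)
  finally show ?thesis by simp
qed

lemma psi_nonpos_le:
  assumes "-1 \<le> u" "u \<le> 0"
  shows "psi u \<le> 37/20 * u^2"
proof -
  have "- (u^3) \<le> u^2"
    using mult_left_le_one_le[of "u^2" "-u"] assms by (simp add: power2_eq_square power3_eq_cube)
  then show ?thesis using assms unfolding psi_def by linarith
qed

lemma proj_ball_unit_id: "-1 \<le> x \<Longrightarrow> x \<le> 1 \<Longrightarrow> proj_ball 1 x = x"
  by (simp add: proj_ball_def)

lemma ada_step_minus_one:
  assumes "-1 \<le> u" "0 \<le> G"
  shows "ada_step (u, G) (-1) = (min 1 (u + 1 / sqrt (G + 1)), G + 1)"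
proof -
  have "0 \<le> 1 / sqrt (G + 1)" using assms by simp
  then have "-1 \<le> u + 1 / sqrt (G + 1)" using assms by linarith
  then show ?thesis by (simp add: proj_ball_def max_def min_def)
qed

lemma ada_step_one:
  assumes "0 \<le> u" "u \<le> 1" "0 \<le> G"
  shows "ada_step (u, G) 1 = (u - 1 / sqrt (G + 1), G + 1)"
proof -
  have "0 \<le> 1 / sqrt (G + 1)" "1 / sqrt (G + 1) \<le> 1" using assms by simp_all
  then have "-1 \<le> u - 1 / sqrt (G + 1)" "u - 1 / sqrt (G + 1) \<le> 1" using assms by linarith+
  then show ?thesis by (simp add: proj_ball_unit_id)
qed

lemma ada_step_zero:
  assumes "0 \<le> G"
  shows "ada_step (0, G) g = (- g / sqrt (G + g^2), G + g^2)"
proof (cases "G + g^2 = 0")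
  case True
  then show ?thesis using assms by (simp add: add_nonneg_eq_0_iff proj_ball_def)
next
  case False
  have "\<bar>g\<bar> \<le> sqrt (G + g^2)"
    using assms by (metis real_sqrt_abs real_sqrt_le_mono le_add_same_cancel2)
  moreover have "0 < sqrt (G + g^2)" using False assms by (simp add: less_le)
  ultimately have "\<bar>g / sqrt (G + g^2)\<bar> \<le> 1" by (simp add: abs_div divide_le_eq_1)
  then have "-1 \<le> - g / sqrt (G + g^2)" "- g / sqrt (G + g^2) \<le> 1"
    using abs_le_D1 abs_le_D2 by fastforce+
  then show ?thesis by (simp add: proj_ball_unit_id)
qed

lemma ada_state_Suc_unit:
  "ada_state gr 1 T (Suc t) = ada_step (ada_state gr 1 T t) (gr (fst (ada_state gr 1 T t)) (T (Suc t)))"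
  by (cases "ada_state gr 1 T t") (simp add: Let_def)

lemma potential_le:
  assumes "ada_invariant (u, G)" "G \<le> N"
  shows "potential (u, G) \<le> 11/20 * N + 650"
proof -
  have G: "0 \<le> G" and u: "-1 \<le> u" "u \<le> 1" "u < 0 \<Longrightarrow> G * u^2 \<le> 1"
    using assms(1) by auto
  have "G * psi u \<le> 11/20 * N + 2"
  proof (cases "u < 0")
    case True
    have "G * psi u \<le> G * (37/20 * u^2)"
      using psi_nonpos_le[of u] G u True by (intro mult_left_mono) auto
    also have "\<dots> \<le> 37/20" using u(3)[OF True] by simp
    finally show ?thesis using G assms(2) by simp
  next
    case False
    then have "psi u \<le> 11/20" using psi_mono_unit[of u 1] u by (simp add: psi_def)
    then have "G * psi u \<le> G * (11/20)" using G by (intro mult_left_mono)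
    then show ?thesis using assms(2) by linarith
  qed
  then show ?thesis by simp
qed

lemma potential_drift_pos:
  fixes u G \<epsilon> :: real
  assumes u: "0 < u" "u \<le> 1" and G: "0 \<le> G"
    and \<epsilon>: "0 \<le> \<epsilon>" "\<epsilon> * sqrt (G + 1) \<le> 1/10"
  shows "potential (u, G) + 1 - 12/5 * u
    \<le> (1 - \<epsilon>)/2 * potential (ada_step (u, G) (-1)) + (1 + \<epsilon>)/2 * potential (ada_step (u, G) 1)"
proof -
  define s where "s = sqrt (G + 1)"
  have s: "1 \<le> s" "G = s^2 - 1" using G by (simp_all add: s_def)
  have up: "ada_step (u, G) (-1) = (min 1 (u + 1/s), G + 1)"
    using ada_step_minus_one[of u G] u G by (simp add: s_def)
  have down: "ada_step (u, G) 1 = (u - 1/s, G + 1)"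
    using ada_step_one[of u G] u G by (simp add: s_def)
  have "\<epsilon> \<le> 1/10" using \<epsilon> s(1) mult_left_mono[of 1 s \<epsilon>] by (simp add: s_def)
  have clip: "psi (u + 1/s) \<le> psi (min 1 (u + 1/s))"
    using psi_le_psi_one[of "u + 1/s"] by (cases "u + 1/s \<le> 1") auto
  have clip': "(1 - \<epsilon>)/2 * ((G + 1) * psi (u + 1/s)) \<le> (1 - \<epsilon>)/2 * ((G + 1) * psi (min 1 (u + 1/s)))"
    using clip G \<open>\<epsilon> \<le> 1/10\<close> by (intro mult_left_mono) auto
  have split: "(1 - \<epsilon>)/2 * potential (ada_step (u, G) (-1)) + (1 + \<epsilon>)/2 * potential (ada_step (u, G) 1)
      = (1 - \<epsilon>)/2 * ((G + 1) * psi (min 1 (u + 1/s))) + (1 + \<epsilon>)/2 * ((G + 1) * psi (u - 1/s))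
        + 8 * min (G + 1) 81"
    unfolding up down by (simp add: field_simps)
  have identity: "(1 - \<epsilon>)/2 * ((G + 1) * psi (u + 1/s)) + (1 + \<epsilon>)/2 * ((G + 1) * psi (u - 1/s)) - G * psi u
      = psi u + 21/20 - 12/5 * u - \<epsilon> * s * (3/10 + 21/10 * u - 12/5 * u^2) + 4/5 * \<epsilon> / s"
    using s(1) unfolding s(2) psi_def by (simp add: field_simps power2_eq_square power3_eq_cube)
  have "u^2 \<le> u" "u^3 \<le> u^2"
    using u by (simp_all add: power2_eq_square power3_eq_cube mult_left_le_one_le mult_right_le_one_le)
  then have slope: "0 \<le> 3/10 + 21/10 * u - 12/5 * u^2" using u by linarith
  have "\<epsilon> * s * (3/10 + 21/10 * u - 12/5 * u^2) \<le> 1/10 * (3/10 + 21/10 * u - 12/5 * u^2)"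
    using \<epsilon>(2) slope by (intro mult_right_mono) (simp_all add: s_def)
  then have "\<epsilon> * s * (3/10 + 21/10 * u - 12/5 * u^2) \<le> 3/100 + 21/100 * u - 6/25 * u^2" by simp
  moreover have "0 \<le> 4/5 * \<epsilon> / s" using \<epsilon> s by simp
  ultimately have "potential (u, G) + 1 - 12/5 * u
      \<le> (1 - \<epsilon>)/2 * ((G + 1) * psi (u + 1/s)) + (1 + \<epsilon>)/2 * ((G + 1) * psi (u - 1/s)) + 8 * min G 81"
    unfolding potential.simps
    using identity \<open>u^3 \<le> u^2\<close> u psi_def[of u] zero_le_power2[of u] by linarith
  also have "\<dots> \<le> (1 - \<epsilon>)/2 * potential (ada_step (u, G) (-1)) + (1 + \<epsilon>)/2 * potential (ada_step (u, G) 1)"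
    unfolding split using clip' by (intro add_mono) auto
  finally show ?thesis .
qed

lemma potential_drift_neg:
  assumes adm: "ada_invariant (u, G)" and u: "u < 0"
  shows "potential (u, G) + 1 - 12/5 * u \<le> potential (ada_step (u, G) (-1))"
proof -
  define s where "s = sqrt (G + 1)"
  define w where "w = - u"
  have G: "0 \<le> G" and w: "0 < w" "w \<le> 1" and Gw: "G * w^2 \<le> 1"
    using adm u by (auto simp: w_def)
  have s: "1 \<le> s" "G = s^2 - 1" using G by (simp_all add: s_def)
  have "1/s \<le> 1" using s by simp
  then have "min 1 (u + 1/s) = u + 1/s" using u by simp
  then have step: "ada_step (u, G) (-1) = (u + 1/s, G + 1)"
    using ada_step_minus_one[of u G] w G by (simp add: s_def w_def)
  define \<Delta> where "\<Delta> = min (G + 1) 81 - min G 81"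
  have "0 \<le> \<Delta>" by (simp add: \<Delta>_def)
  have gain: "potential (ada_step (u, G) (-1)) - (potential (u, G) + 1 - 12/5 * u)
      = psi u + 3/10 * s - 21/10 * (s * w) - 12/5 * (s * w * w) + 1/20 - 4/5 / s + 8 * \<Delta>"
    unfolding step potential.simps \<Delta>_def using s(1) unfolding s(2) psi_def w_def
    by (simp add: field_simps power2_eq_square power3_eq_cube)
  have "0 \<le> u^2" "u^3 \<le> 0" using u by (simp_all add: power3_eq_cube mult_nonneg_nonpos)
  then have psi_u: "- 3/10 * w \<le> psi u" unfolding psi_def w_def by linarith
  have sw: "(s * w)^2 = G * w^2 + w^2" unfolding s(2) by (simp add: power_mult_distrib algebra_simps)
  have "w^2 \<le> 1" using w by (simp add: power_le_one)
  show ?thesis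
  proof (cases "80 \<le> G")
    case True
    have "80 * w^2 \<le> 1" using Gw True by (meson mult_right_mono order_trans zero_le_power2)
    then have "w^2 \<le> (3/25)^2" "(s * w)^2 \<le> (101/100)^2" using Gw sw by (simp_all add: power2_eq_square)
    then have w_le: "w \<le> 3/25" and sw_le: "s * w \<le> 101/100"
      using s w by (auto intro: power2_le_imp_le)
    have "81 \<le> s^2" using True s by simp
    then have "9 \<le> s" using s by (auto intro: power2_le_imp_le)
    have "s * w * w \<le> 101/100 * (3/25)" using w_le sw_le s w by (intro mult_mono) auto
    moreover have "4/5 / s \<le> 4/45" using \<open>9 \<le> s\<close> by (simp add: divide_simps)
    ultimately show ?thesis using gain psi_u w_le sw_le \<open>9 \<le> s\<close> \<open>0 \<le> \<Delta>\<close> by linarith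
  next
    case False
    have "(s * w)^2 \<le> (3/2)^2" using Gw sw \<open>w^2 \<le> 1\<close> by (simp add: power2_eq_square)
    then have sw_le: "s * w \<le> 3/2" using s w by (auto intro: power2_le_imp_le)
    have "s * w * w \<le> 3/2" using sw_le s w mult_mono[of "s * w" "3/2" w 1] by simp
    moreover have "4/5 / s \<le> 4/5" using s by (simp add: divide_simps)
    moreover have "\<Delta> = 1" using False by (simp add: \<Delta>_def)
    ultimately show ?thesis using gain psi_u sw_le s w by linarith
  qed
qed

lemma potential_ada_step_zero:
  assumes "0 \<le> G"
  shows "potential (ada_step (0, G) g) = potential (0, G)
    - 3/10 * g * sqrt (G + g^2) + 21/20 * g^2 + 4/5 * g^3 / sqrt (G + g^2)
    + 8 * (min (G + g^2) 81 - min G 81)"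
proof -
  define r where "r = sqrt (G + g^2)"
  have "(G + g^2) * psi (- g / r) = - 3/10 * g * r + 21/20 * g^2 + 4/5 * g^3 / r"
  proof (cases "r = 0")
    case False
    then have "G + g^2 = r^2" using assms by (simp add: r_def)
    then show ?thesis using False unfolding psi_def by (simp add: field_simps power2_eq_square power3_eq_cube)
  next
    case True
    then have "g = 0" using assms by (simp add: r_def add_nonneg_eq_0_iff)
    then show ?thesis by (simp add: psi_def)
  qed
  then show ?thesis unfolding ada_step_zero[OF assms] potential.simps r_def[symmetric] by (simp add: psi_def)
qed

text \<open>The case \<open>G \<ge> 80\<close>, \<open>g > 0\<close> of the drift at \<open>u = 0\<close>, with \<open>s = sqrt (G + 1)\<close> and
  \<open>r = sqrt (G + g^2)\<close>.\<close>
lemma drift_at_zero_large_arith: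
  fixes s r g \<epsilon> :: real
  assumes s: "9 \<le> s" and g: "0 < g" "g \<le> 1" and r: "0 < r" "r \<le> s"
    and \<epsilon>: "0 \<le> \<epsilon>" "\<epsilon> \<le> 1/500" "\<epsilon> * s \<le> 1/10"
  shows "1 \<le> (1 - \<epsilon>)/2 * (3/10 * s + 21/20 - 4/5 / s)
    + (1 + \<epsilon>)/2 * (- 3/10 * g * r + 21/20 * g^2 + 4/5 * g^3 / r)"
proof -
  define a where "a = 1 / s"
  define A where "A = 3/10 * s + 21/20 - 4/5 * a"
  define B where "B = - 3/10 * (g * s) + 21/20 * g^2 + 4/5 * (g^3 * a)"
  have "g * r \<le> g * s" using g r by simp
  moreover have "g^3 * a \<le> g^3 / r"
    using g r by (simp add: a_def divide_simps mult_left_mono)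
  ultimately have B_le: "B \<le> - 3/10 * g * r + 21/20 * g^2 + 4/5 * g^3 / r" unfolding B_def by simp
  have "a \<le> 1/9" "0 < a" using s by (simp_all add: a_def divide_simps)
  have "g^2 \<le> g" "g^3 \<le> g^2" using g
    by (simp_all add: power2_eq_square power3_eq_cube mult_left_le_one_le mult_right_le_one_le)
  have "(1 - g) * (1 + g + g^2) \<le> (1 - g) * 3" using g \<open>g^2 \<le> g\<close> by (intro mult_left_mono) auto
  then have "1 - g^3 \<le> 3 * (1 - g)" by (simp add: algebra_simps power2_eq_square power3_eq_cube)
  have "9 * (1 - g) \<le> s * (1 - g)" using s g by (intro mult_right_mono) auto
  moreover have "a * (1 - g^3) \<le> 1/9 * (3 * (1 - g))"
    using \<open>a \<le> 1/9\<close> \<open>0 < a\<close> \<open>1 - g^3 \<le> 3 * (1 - g)\<close> \<open>g^3 \<le> g^2\<close> \<open>g^2 \<le> g\<close> g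
    by (intro mult_mono) auto
  moreover have "0 \<le> (1 - g)^2" by simp
  ultimately have "21/10 \<le> A + B"
    using g unfolding A_def B_def by (simp add: algebra_simps power2_eq_square)
  have "g * s \<le> s" "0 \<le> g^3 * a" using g s \<open>0 < a\<close> by (simp_all add: mult_left_le_one_le)
  then have "- 3/5 * s - 21/20 \<le> B - A"
    unfolding A_def B_def using \<open>0 < a\<close> zero_le_power2[of g] by linarith
  then have "\<epsilon>/2 * (- 3/5 * s - 21/20) \<le> \<epsilon>/2 * (B - A)" using \<epsilon> by (intro mult_left_mono) auto
  moreover have "(1 - \<epsilon>)/2 * A + (1 + \<epsilon>)/2 * B = A/2 + B/2 + \<epsilon>/2 * (B - A)"
    by (simp add: field_simps)
  moreover have "\<epsilon>/2 * (- 3/5 * s - 21/20) = - 3/10 * (\<epsilon> * s) - 21/40 * \<epsilon>" by (simp add: algebra_simps)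
  ultimately have "1 \<le> (1 - \<epsilon>)/2 * A + (1 + \<epsilon>)/2 * B" using \<open>21/10 \<le> A + B\<close> \<epsilon> by linarith
  also have "\<dots> \<le> (1 - \<epsilon>)/2 * A + (1 + \<epsilon>)/2 * (- 3/10 * g * r + 21/20 * g^2 + 4/5 * g^3 / r)"
    using B_le \<epsilon> by (simp add: mult_left_mono)
  finally show ?thesis by (simp add: A_def a_def)
qed

lemma neg_square_le_cube_divide:
  fixes g r :: real
  assumes "\<bar>g\<bar> \<le> r"
  shows "- (g^2) \<le> g^3 / r"
proof (cases "r = 0")
  case False
  then have "- 1 \<le> g / r" using assms by (simp add: divide_simps abs_le_iff)
  then have "g^2 * (- 1) \<le> g^2 * (g / r)" by (intro mult_left_mono) auto
  then show ?thesis by (simp add: power2_eq_square power3_eq_cube)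
qed simp

lemma drift_at_zero_arith:
  fixes s r g \<epsilon> d\<^sub>1 d :: real
  assumes s: "1 \<le> s" and r: "\<bar>g\<bar> \<le> r" "r \<le> s" and g: "\<bar>g\<bar> \<le> 1"
    and \<epsilon>: "0 \<le> \<epsilon>" "\<epsilon> \<le> 1/500" "\<epsilon> * s \<le> 1/10"
    and d: "0 \<le> d\<^sub>1" "0 \<le> d" "s < 9 \<Longrightarrow> d\<^sub>1 = 1"
  shows "1 \<le> (1 - \<epsilon>)/2 * (3/10 * s + 21/20 - 4/5 / s + 8 * d\<^sub>1)
    + (1 + \<epsilon>)/2 * (- 3/10 * g * r + 21/20 * g^2 + 4/5 * g^3 / r + 8 * d)"
proof -
  define up where "up = 3/10 * s + 21/20 - 4/5 / s"
  define down where "down = - 3/10 * g * r + 21/20 * g^2 + 4/5 * g^3 / r"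
  have "0 \<le> r" using r(1) by linarith
  have cube: "- (g^2) \<le> g^3 / r" using r(1) by (rule neg_square_le_cube_divide)
  consider (small) "s < 9" | (nonpos) "9 \<le> s" "g \<le> 0" | (pos) "9 \<le> s" "0 < g" by linarith
  then have "1 \<le> (1 - \<epsilon>)/2 * (up + 8 * d\<^sub>1) + (1 + \<epsilon>)/2 * (down + 8 * d)"
  proof cases
    case small
    have "4/5 / s \<le> 4/5" using s by (simp add: divide_simps)
    then have up_ge: "171/20 \<le> up + 8 * d\<^sub>1" using s d(3)[OF small] unfolding up_def by linarith
    have "g * r \<le> 9"
      using r g small mult_mono[of "\<bar>g\<bar>" 1 r 9] mult_right_mono[OF abs_ge_self[of g] \<open>0 \<le> r\<close>] by linarith
    then have down_ge: "- 7/2 \<le> down + 8 * d"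
      using cube d(2) zero_le_power2[of g] unfolding down_def by linarith
    have "1 \<le> (1 - \<epsilon>)/2 * (171/20) + (1 + \<epsilon>)/2 * (- 7/2)" using \<epsilon>(2) by (simp add: field_simps)
    also have "\<dots> \<le> (1 - \<epsilon>)/2 * (up + 8 * d\<^sub>1) + (1 + \<epsilon>)/2 * (down + 8 * d)"
      using up_ge down_ge \<epsilon> by (intro add_mono mult_left_mono) auto
    finally show ?thesis .
  next
    case nonpos
    have "4/5 / s \<le> 4/45" using nonpos by (simp add: divide_simps)
    then have up_ge: "18/5 \<le> up + 8 * d\<^sub>1" using nonpos d(1) unfolding up_def by linarith
    have "g * r \<le> 0" using nonpos \<open>0 \<le> r\<close> by (simp add: mult_nonpos_nonneg)
    then have down_ge: "0 \<le> down + 8 * d"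
      using cube d(2) zero_le_power2[of g] unfolding down_def by linarith
    have "1 \<le> (1 - \<epsilon>)/2 * (18/5) + (1 + \<epsilon>)/2 * 0" using \<epsilon>(2) by (simp add: field_simps)
    also have "\<dots> \<le> (1 - \<epsilon>)/2 * (up + 8 * d\<^sub>1) + (1 + \<epsilon>)/2 * (down + 8 * d)"
      using up_ge down_ge \<epsilon> by (intro add_mono mult_left_mono) auto
    finally show ?thesis .
  next
    case pos
    then have "1 \<le> (1 - \<epsilon>)/2 * up + (1 + \<epsilon>)/2 * down"
      unfolding up_def down_def using g r \<epsilon> by (intro drift_at_zero_large_arith) auto
    also have "\<dots> \<le> (1 - \<epsilon>)/2 * (up + 8 * d\<^sub>1) + (1 + \<epsilon>)/2 * (down + 8 * d)"
      using d \<epsilon> by (intro add_mono mult_left_mono) auto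
    finally show ?thesis .
  qed
  then show ?thesis by (simp only: up_def down_def)
qed

lemma potential_drift_zero:
  fixes G g \<epsilon> :: real
  assumes G: "0 \<le> G" and g: "\<bar>g\<bar> \<le> 1"
    and \<epsilon>: "0 \<le> \<epsilon>" "\<epsilon> \<le> 1/500" "\<epsilon> * sqrt (G + 1) \<le> 1/10"
  shows "potential (0, G) + 1
    \<le> (1 - \<epsilon>)/2 * potential (ada_step (0, G) (-1)) + (1 + \<epsilon>)/2 * potential (ada_step (0, G) g)"
proof -
  define s where "s = sqrt (G + 1)"
  define r where "r = sqrt (G + g^2)"
  define up where "up = 3/10 * s + 21/20 - 4/5 / s + 8 * (min (G + 1) 81 - min G 81)"
  define down where "down = - 3/10 * g * r + 21/20 * g^2 + 4/5 * g^3 / r + 8 * (min (G + g^2) 81 - min G 81)"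
  have "potential (ada_step (0, G) (-1)) = potential (0, G) + up"
    using potential_ada_step_zero[OF G, of "-1"] by (simp add: up_def s_def)
  moreover have "potential (ada_step (0, G) g) = potential (0, G) + down"
    using potential_ada_step_zero[OF G, of g] by (simp add: down_def r_def)
  ultimately have "(1 - \<epsilon>)/2 * potential (ada_step (0, G) (-1)) + (1 + \<epsilon>)/2 * potential (ada_step (0, G) g)
      = potential (0, G) + ((1 - \<epsilon>)/2 * up + (1 + \<epsilon>)/2 * down)"
    by (simp add: field_simps)
  moreover have "1 \<le> (1 - \<epsilon>)/2 * up + (1 + \<epsilon>)/2 * down"
    unfolding up_def down_def
  proof (rule drift_at_zero_arith)
    have "g^2 \<le> 1" using g by (simp add: abs_square_le_1)
    then show "\<bar>g\<bar> \<le> r" "r \<le> s"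
      using G unfolding r_def s_def by (auto simp: real_sqrt_le_mono intro: real_le_rsqrt)
    show "0 \<le> min (G + 1) 81 - min G 81" by simp
    show "0 \<le> min (G + g^2) 81 - min G 81" using min.mono[of G "G + g^2" 81 81] by simp
    show "min (G + 1) 81 - min G 81 = 1" if "s < 9"
    proof -
      have "s^2 < 9^2" using that G by (intro power_strict_mono) (simp_all add: s_def)
      then show ?thesis using G by (simp add: s_def)
    qed
  qed (use G g \<epsilon> in \<open>simp_all add: s_def\<close>)
  ultimately show ?thesis by linarith
qed

lemma potential_drift:
  assumes adm: "ada_invariant (u, G)" and g: "\<bar>g\<bar> \<le> 1" "u \<noteq> 0 \<Longrightarrow> g = sgn u"
    and \<epsilon>: "0 \<le> \<epsilon>" "\<epsilon> \<le> 1/500" "\<epsilon> * sqrt (G + 1) \<le> 1/10"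
  shows "potential (u, G) + 1 - 12/5 * u
    \<le> (1 - \<epsilon>)/2 * potential (ada_step (u, G) (-1)) + (1 + \<epsilon>)/2 * potential (ada_step (u, G) g)"
proof (cases u "0::real" rule: linorder_cases)
  case less
  have "(1 - \<epsilon>)/2 * x + (1 + \<epsilon>)/2 * x = x" for x :: real by (simp add: field_simps)
  then show ?thesis using potential_drift_neg[OF adm less] g(2) less by simp
next
  case equal
  then show ?thesis using potential_drift_zero[of G g \<epsilon>] adm g(1) \<epsilon> by simp
next
  case greater
  then show ?thesis using potential_drift_pos[of u G \<epsilon>] adm g(2) \<epsilon> by simp
qed

lemma ada_invariant_step_zero:
  assumes G: "0 \<le> G" and g: "\<bar>g\<bar> \<le> 1"
  shows "ada_invariant (ada_step (0, G) g)"
proof -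
  define r where "r = sqrt (G + g^2)"
  have "\<bar>g\<bar> \<le> r" using G unfolding r_def by (metis real_sqrt_abs real_sqrt_le_mono le_add_same_cancel2)
  have "\<bar>g / r\<bar> \<le> 1 \<and> (G + g^2) * (- g / r)^2 = g^2"
  proof (cases "r = 0")
    case True
    then show ?thesis using G by (simp add: r_def add_nonneg_eq_0_iff)
  next
    case False
    then have "0 < r" "r^2 = G + g^2" using G by (simp_all add: r_def less_le)
    then show ?thesis
      using \<open>\<bar>g\<bar> \<le> r\<close> G by (simp add: abs_div divide_le_eq_1 power_divide add_nonneg_eq_0_iff)
  qed
  moreover have "g^2 \<le> 1" using g by (simp add: abs_square_le_1)
  ultimately have "-1 \<le> - g / r" "- g / r \<le> 1" "(G + g^2) * (- g / r)^2 \<le> 1"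
    using abs_le_D1[of "g / r" 1] abs_le_D2[of "g / r" 1] by auto
  then show ?thesis unfolding ada_step_zero[OF G] r_def[symmetric] using G by simp
qed

lemma ada_invariant_step_minus_one:
  assumes "ada_invariant (u, G)"
  shows "ada_invariant (ada_step (u, G) (-1))"
proof -
  have G: "0 \<le> G" and u: "-1 \<le> u" "u \<le> 1" "u < 0 \<Longrightarrow> G * u^2 \<le> 1" using assms by auto
  define s where "s = sqrt (G + 1)"
  define p where "p = s * u"
  have s: "1 \<le> s" "s^2 = G + 1" "0 < 1/s" using G by (simp_all add: s_def)
  have "(G + 1) * (u + 1/s)^2 = (p + 1)^2"
    unfolding p_def s(2)[symmetric] using s(1) by (simp add: power2_eq_square field_simps)
  moreover have "-2 \<le> p" "p < -1" if "u + 1/s < 0"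
  proof -
    have "u < 0" using that s(3) by linarith
    then have "p^2 \<le> 2^2"
      using u abs_square_le_1[of u] unfolding p_def by (simp add: power_mult_distrib s(2) algebra_simps)
    then show "-2 \<le> p" using power2_le_imp_le[of "- p" 2] by simp
    show "p < -1" using that s(1) unfolding p_def by (simp add: field_simps)
  qed
  ultimately have "(G + 1) * (u + 1/s)^2 \<le> 1" if "u + 1/s < 0"
    using that mult_nonpos_nonneg[of p "p + 2"] by (simp add: power2_eq_square algebra_simps)
  moreover have "-1 \<le> u + 1/s" using u s(3) by linarith
  ultimately show ?thesis using G ada_step_minus_one[of u G] u by (auto simp: s_def min_def)
qed

lemma ada_invariant_step_one:
  assumes "ada_invariant (u, G)" "0 \<le> u"
  shows "ada_invariant (ada_step (u, G) 1)"
proof -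
  have G: "0 \<le> G" and u: "u \<le> 1" using assms by auto
  define s where "s = sqrt (G + 1)"
  define p where "p = s * u"
  have s: "1 \<le> s" "s^2 = G + 1" using G by (simp_all add: s_def)
  have "(G + 1) * (u - 1/s)^2 = (p - 1)^2"
    unfolding p_def s(2)[symmetric] using s(1) by (simp add: power2_eq_square field_simps)
  moreover have "p < 1" if "u - 1/s < 0" using that s(1) unfolding p_def by (simp add: field_simps)
  moreover have "0 \<le> p" using assms(2) s unfolding p_def by simp
  ultimately have "(G + 1) * (u - 1/s)^2 \<le> 1" if "u - 1/s < 0"
    using that mult_nonneg_nonpos[of p "p - 2"] by (simp add: power2_eq_square algebra_simps)
  moreover have "0 < 1/s" "1/s \<le> 1" using s(1) by simp_all
  with assms(2) u have "-1 \<le> u - 1/s" "u - 1/s \<le> 1" by linarith+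
  ultimately show ?thesis using G u assms(2) ada_step_one[of u G] by (simp add: s_def)
qed

lemma ada_invariant_step:
  assumes adm: "ada_invariant (u, G)" and g: "\<bar>g\<bar> \<le> 1" "u \<noteq> 0 \<Longrightarrow> g = -1 \<or> g = sgn u"
  shows "ada_invariant (ada_step (u, G) g)"
proof -
  consider "u = 0" | "g = -1" | "0 < u" "g = 1"
    using g by (cases u "0::real" rule: linorder_cases) auto
  then show ?thesis
    using adm g(1) ada_invariant_step_zero ada_invariant_step_minus_one ada_invariant_step_one
    by cases auto
qed

section \<open>AdaSGD with unit learning rate on the hard instance\<close>

definition hard_loss :: "real \<Rightarrow> real \<Rightarrow> real" where
  "hard_loss x s = (if s = 1 then - x else \<bar>x\<bar>)"

definition is_hard_subgradient :: "(real \<Rightarrow> real \<Rightarrow> real) \<Rightarrow> bool" where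
  "is_hard_subgradient gr \<longleftrightarrow> (\<forall>s x y. hard_loss x s + gr x s * (y - x) \<le> hard_loss y s)"

lemma hard_subgradientD:
  "is_hard_subgradient gr \<Longrightarrow> hard_loss x s + gr x s * (y - x) \<le> hard_loss y s"
  unfolding is_hard_subgradient_def by blast

lemma hard_subgradient_one:
  assumes "is_hard_subgradient gr"
  shows "gr u 1 = -1"
  using hard_subgradientD[OF assms, of u 1 "u + 1"] hard_subgradientD[OF assms, of u 1 "u - 1"]
  by (simp add: hard_loss_def)

lemma hard_subgradient_sgn:
  assumes "is_hard_subgradient gr" "s \<noteq> 1" "u \<noteq> 0"
  shows "gr u s = sgn u"
proof -
  have "\<bar>u\<bar> + gr u s * u \<le> 2 * \<bar>u\<bar>" "\<bar>u\<bar> - gr u s * u \<le> 0"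
    using hard_subgradientD[OF assms(1), of u s "2 * u"] hard_subgradientD[OF assms(1), of u s 0] assms(2)
    by (simp_all add: hard_loss_def abs_mult algebra_simps)
  then have "gr u s * u = \<bar>u\<bar>" by linarith
  also have "\<bar>u\<bar> = sgn u * u" by (simp add: abs_if sgn_if)
  finally show ?thesis using assms(3) by simp
qed

lemma hard_subgradient_abs_le:
  assumes "is_hard_subgradient gr"
  shows "\<bar>gr u s\<bar> \<le> 1"
proof -
  have lip: "\<bar>hard_loss y s - hard_loss u s\<bar> \<le> \<bar>y - u\<bar>" for y
    by (simp add: hard_loss_def abs_triangle_ineq3 abs_minus_commute)
  show ?thesis
    using hard_subgradientD[OF assms, of u s "u + 1"] hard_subgradientD[OF assms, of u s "u - 1"]
      lip[of "u + 1"] lip[of "u - 1"] by (simp add: abs_le_iff)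
qed

definition bit_pmf :: "real \<Rightarrow> real pmf" where
  "bit_pmf q = map_pmf (\<lambda>b. if b then 1 else 0) (bernoulli_pmf q)"

lemma set_pmf_bit_pmf: "set_pmf (bit_pmf q) \<subseteq> {0, 1}"
  by (auto simp: bit_pmf_def)

lemma finite_set_pmf_bit_pmf: "finite (set_pmf (bit_pmf q))"
  using set_pmf_bit_pmf by (rule finite_subset) simp

lemma expectation_bit_pmf:
  "0 \<le> q \<Longrightarrow> q \<le> 1 \<Longrightarrow> measure_pmf.expectation (bit_pmf q) h = q * h 1 + (1 - q) * h 0"
  by (simp add: bit_pmf_def)

lemma convex_hard_loss: "convex_on UNIV (\<lambda>x. hard_loss x s)"
proof (cases "s = 1")
  case True
  then show ?thesis by (intro convex_onI) (simp_all add: hard_loss_def algebra_simps)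
next
  case False
  then have "(\<lambda>x. hard_loss x s) = norm" by (simp add: hard_loss_def fun_eq_iff)
  then show ?thesis using convex_on_dist[of UNIV 0] by simp
qed

lemma hard_loss_lipschitz: "\<bar>hard_loss x s - hard_loss y s\<bar> \<le> \<bar>x - y\<bar>"
  by (simp add: hard_loss_def abs_triangle_ineq3 abs_minus_commute)

lemma pop_risk_hard_loss:
  assumes "0 \<le> \<epsilon>" "\<epsilon> \<le> 1"
  shows "pop_risk (measure_pmf (bit_pmf ((1 - \<epsilon>)/2))) hard_loss x = (if 0 \<le> x then \<epsilon> * x else - x)"
  unfolding pop_risk_def using assms by (simp add: expectation_bit_pmf hard_loss_def field_simps)

lemma INF_pop_risk_hard_loss:
  assumes "0 \<le> \<epsilon>" "\<epsilon> \<le> 1"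
  shows "(INF x. pop_risk (measure_pmf (bit_pmf ((1 - \<epsilon>)/2))) hard_loss x) = 0"
  using assms by (intro cInf_eq_minimum[of 0]) (auto simp: pop_risk_hard_loss)

primrec ada_chain :: "(real \<Rightarrow> real \<Rightarrow> real) \<Rightarrow> real pmf \<Rightarrow> nat \<Rightarrow> (real \<times> real) pmf" where
  "ada_chain gr p 0 = return_pmf (0, 0)"
| "ada_chain gr p (Suc t) = ada_chain gr p t \<bind> (\<lambda>x. map_pmf (\<lambda>s. ada_step x (gr (fst x) s)) p)"

lemma finite_set_pmf_ada_chain: "finite (set_pmf p) \<Longrightarrow> finite (set_pmf (ada_chain gr p t))"
  by (induction t) auto

lemma ada_invariant_chain:
  assumes gr: "is_hard_subgradient gr" and p: "set_pmf p \<subseteq> {0, 1}"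
  shows "x \<in> set_pmf (ada_chain gr p t) \<Longrightarrow> ada_invariant x \<and> snd x \<le> t"
proof (induction t arbitrary: x)
  case (Suc t)
  then obtain y s where y: "y \<in> set_pmf (ada_chain gr p t)" and "s \<in> set_pmf p"
    and x: "x = ada_step y (gr (fst y) s)" by (auto simp del: ada_step.simps)
  then have s: "s \<in> {0, 1}" using p by blast
  obtain u G where uG: "(u, G) \<in> set_pmf (ada_chain gr p t)" and x: "x = ada_step (u, G) (gr u s)"
    using y x by (cases y) auto
  have g: "\<bar>gr u s\<bar> \<le> 1" "u \<noteq> 0 \<Longrightarrow> gr u s = -1 \<or> gr u s = sgn u"
    using hard_subgradient_one[OF gr] hard_subgradient_sgn[OF gr] hard_subgradient_abs_le[OF gr] s
    by auto
  have "(gr u s)^2 \<le> 1" using g(1) by (simp add: abs_square_le_1)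
  then show ?case using Suc.IH[OF uG] ada_invariant_step[OF _ g] unfolding x by auto
qed simp

lemma expectation_ada_chain_Suc:
  fixes f :: "real \<times> real \<Rightarrow> real"
  assumes "0 \<le> q" "q \<le> 1"
  shows "measure_pmf.expectation (ada_chain gr (bit_pmf q) (Suc t)) f
    = measure_pmf.expectation (ada_chain gr (bit_pmf q) t)
        (\<lambda>x. q * f (ada_step x (gr (fst x) 1)) + (1 - q) * f (ada_step x (gr (fst x) 0)))"
    (is "_ = measure_pmf.expectation ?C ?h")
proof -
  have fin: "finite (set_pmf ?C)" by (rule finite_set_pmf_ada_chain[OF finite_set_pmf_bit_pmf])
  have "measure_pmf.expectation (ada_chain gr (bit_pmf q) (Suc t)) f = (\<Sum>x\<in>set_pmf ?C. pmf ?C x * ?h x)"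
    using fin finite_set_pmf_bit_pmf
    by (simp add: pmf_expectation_bind[of "set_pmf ?C"] expectation_bit_pmf[OF assms])
  also have "\<dots> = measure_pmf.expectation ?C ?h"
    using fin by (simp add: integral_measure_pmf[of "set_pmf ?C"])
  finally show ?thesis .
qed

lemma expected_potential_Suc:
  assumes gr: "is_hard_subgradient gr"
    and \<epsilon>: "0 \<le> \<epsilon>" "\<epsilon> \<le> 1/500" "\<epsilon> * sqrt (Suc t) \<le> 1/10"
  defines "C \<equiv> ada_chain gr (bit_pmf ((1 - \<epsilon>)/2))"
  shows "measure_pmf.expectation (C t) potential + 1 - 12/5 * measure_pmf.expectation (C t) fst
    \<le> measure_pmf.expectation (C (Suc t)) potential"
proof -
  have fin: "finite (set_pmf (C t))"
    unfolding C_def by (rule finite_set_pmf_ada_chain[OF finite_set_pmf_bit_pmf])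
  note integrable = integrable_measure_pmf_finite[OF fin]
  have drift: "potential x + 1 - 12/5 * fst x
      \<le> (1 - \<epsilon>)/2 * potential (ada_step x (gr (fst x) 1)) + (1 + \<epsilon>)/2 * potential (ada_step x (gr (fst x) 0))"
    if "x \<in> set_pmf (C t)" for x
  proof -
    obtain u G where x: "x = (u, G)" by fastforce
    have adm: "ada_invariant (u, G)" "G \<le> t"
      using ada_invariant_chain[OF gr set_pmf_bit_pmf] that unfolding C_def x by auto
    have "sqrt (G + 1) \<le> sqrt (Suc t)" using adm(2) by simp
    then have "\<epsilon> * sqrt (G + 1) \<le> 1/10" using \<epsilon> by (meson mult_left_mono order_trans)
    then show ?thesis
      unfolding x fst_conv hard_subgradient_one[OF gr]
      using potential_drift[OF adm(1) hard_subgradient_abs_le[OF gr] hard_subgradient_sgn[OF gr] \<epsilon>(1,2)]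
      by simp
  qed
  have "measure_pmf.expectation (C t) potential + 1 - 12/5 * measure_pmf.expectation (C t) fst
      = measure_pmf.expectation (C t) (\<lambda>x. potential x + 1 - 12/5 * fst x)"
    by (simp add: integrable)
  also have "\<dots> \<le> measure_pmf.expectation (C t)
      (\<lambda>x. (1 - \<epsilon>)/2 * potential (ada_step x (gr (fst x) 1)) + (1 + \<epsilon>)/2 * potential (ada_step x (gr (fst x) 0)))"
    using drift by (intro integral_mono_AE) (auto simp: AE_measure_pmf_iff integrable)
  also have "\<dots> = measure_pmf.expectation (C (Suc t)) potential"
    using \<epsilon> unfolding C_def by (subst expectation_ada_chain_Suc) (simp_all add: field_simps)
  finally show ?thesis .
qed

lemma expected_potential_ge_sum:
  fixes m :: nat
  assumes gr: "is_hard_subgradient gr"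
    and \<epsilon>: "0 \<le> \<epsilon>" "\<epsilon> \<le> 1/500" "\<epsilon> * sqrt m \<le> 1/10"
  defines "C \<equiv> ada_chain gr (bit_pmf ((1 - \<epsilon>)/2))"
  shows "(\<Sum>t<m. 1 - 12/5 * measure_pmf.expectation (C t) fst) \<le> measure_pmf.expectation (C m) potential"
  using \<epsilon>(3)
proof (induction m)
  case (Suc m)
  have "\<epsilon> * sqrt m \<le> \<epsilon> * sqrt (Suc m)" using \<epsilon>(1) by (simp add: mult_left_mono)
  then show ?case
    using Suc expected_potential_Suc[OF gr \<epsilon>(1,2) Suc.prems] unfolding C_def by simp
qed (simp add: C_def)

lemma expected_potential_le:
  assumes gr: "is_hard_subgradient gr" and p: "set_pmf p \<subseteq> {0, 1}"
  shows "measure_pmf.expectation (ada_chain gr p n) potential \<le> 11/20 * n + 650"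
proof -
  have "finite (set_pmf (ada_chain gr p n))"
    using p by (intro finite_set_pmf_ada_chain) (rule finite_subset, auto)
  moreover have "potential x \<le> 11/20 * n + 650" if "x \<in> set_pmf (ada_chain gr p n)" for x
    using ada_invariant_chain[OF gr p that] potential_le[of "fst x" "snd x"] by simp
  ultimately have "measure_pmf.expectation (ada_chain gr p n) potential
      \<le> measure_pmf.expectation (ada_chain gr p n) (\<lambda>_. 11/20 * n + 650)"
    by (intro integral_mono_AE) (auto simp: AE_measure_pmf_iff integrable_measure_pmf_finite)
  then show ?thesis by simp
qed

lemma sum_expected_iterate_ge:
  fixes n :: nat
  assumes gr: "is_hard_subgradient gr" and n: "3000 \<le> n"
  defines "\<epsilon> \<equiv> 1 / (10 * sqrt n)"
  shows "7/72 * n \<le> (\<Sum>t<n. measure_pmf.expectation (ada_chain gr (bit_pmf ((1 - \<epsilon>)/2)) t) fst)"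
proof -
  have "50^2 \<le> (sqrt n)^2" using n by simp
  then have "50 \<le> sqrt n" by (rule power2_le_imp_le) simp
  then have \<epsilon>: "0 \<le> \<epsilon>" "\<epsilon> \<le> 1/500" "\<epsilon> * sqrt n \<le> 1/10" by (simp_all add: \<epsilon>_def divide_simps)
  let ?C = "ada_chain gr (bit_pmf ((1 - \<epsilon>)/2))"
  have "real n - 12/5 * (\<Sum>t<n. measure_pmf.expectation (?C t) fst)
      = (\<Sum>t<n. 1 - 12/5 * measure_pmf.expectation (?C t) fst)"
    by (simp add: sum_subtractf sum_distrib_left)
  also have "\<dots> \<le> 11/20 * n + 650"
    using expected_potential_ge_sum[OF gr \<epsilon>] expected_potential_le[OF gr set_pmf_bit_pmf] by (rule order_trans)
  finally show ?thesis using n by linarith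
qed

lemma ada_state_cong:
  "(\<And>j. 1 \<le> j \<Longrightarrow> j \<le> t \<Longrightarrow> T j = T' j) \<Longrightarrow> ada_state gr R T t = ada_state gr R T' t"
  by (induction t) (auto simp: Let_def)

lemma adasgd_training_cong:
  "(\<And>i. n < i \<Longrightarrow> S i = S' i) \<Longrightarrow> adasgd n gr R S = adasgd n gr R S'"
  unfolding adasgd_def
  by (intro arg_cong[where f = "\<lambda>x. x / n"] sum.cong refl arg_cong[where f = fst] ada_state_cong) auto

lemma map_Pi_pmf_ada_state_eq:
  "map_pmf (\<lambda>S. ada_state gr 1 (\<lambda>j. S (k + j)) t) (Pi_pmf {k+1..k+t} d (\<lambda>_. p)) = ada_chain gr p t"
proof (induction t)
  case 0
  then show ?case by simp
next
  case (Suc t)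
  let ?A = "\<lambda>S. ada_state gr 1 (\<lambda>j. S (k + j)) t"
  let ?Q = "Pi_pmf {k+1..k+t} d (\<lambda>_. p)"
  have "{k+1..k + Suc t} = insert (k + Suc t) {k+1..k+t}" by auto
  then have Pi: "Pi_pmf {k+1..k + Suc t} d (\<lambda>_. p) = map_pmf (\<lambda>(y, S). S(k + Suc t := y)) (pair_pmf p ?Q)"
    by (simp add: Pi_pmf_insert)
  have "ada_state gr 1 (\<lambda>j. (S(k + Suc t := y)) (k + j)) (Suc t) = ada_step (?A S) (gr (fst (?A S)) y)"
    for S y
  proof -
    have "ada_state gr 1 (\<lambda>j. (S(k + Suc t := y)) (k + j)) t = ?A S" by (rule ada_state_cong) auto
    then show ?thesis by (simp only: ada_state_Suc_unit) simp
  qed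
  then have "map_pmf (\<lambda>S. ada_state gr 1 (\<lambda>j. S (k + j)) (Suc t)) (Pi_pmf {k+1..k + Suc t} d (\<lambda>_. p))
      = map_pmf (\<lambda>(y, S). ada_step (?A S) (gr (fst (?A S)) y)) (pair_pmf p ?Q)"
    unfolding Pi pmf.map_comp by (intro map_pmf_cong) auto
  also have "\<dots> = ?Q \<bind> (\<lambda>S. map_pmf (\<lambda>y. ada_step (?A S) (gr (fst (?A S)) y)) p)"
    unfolding pair_pmf_def map_pmf_def by (subst bind_commute_pmf) (simp add: bind_assoc_pmf bind_return_pmf)
  also have "\<dots> = ada_chain gr p (Suc t)"
    by (simp add: Suc.IH[symmetric] bind_map_pmf)
  finally show ?case .
qed

lemma map_Pi_pmf_ada_state:
  assumes "t \<le> m"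
  shows "map_pmf (\<lambda>S. ada_state gr 1 (\<lambda>j. S (k + j)) t) (Pi_pmf {k+1..k+m} d (\<lambda>_. p)) = ada_chain gr p t"
proof -
  have "Pi_pmf {k+1..k+t} d (\<lambda>_. p)
      = map_pmf (\<lambda>S j. if j \<in> {k+1..k+t} then S j else d) (Pi_pmf {k+1..k+m} d (\<lambda>_. p))"
    using assms by (intro Pi_pmf_subset) auto
  moreover have "ada_state gr 1 (\<lambda>j. if k + j \<in> {k+1..k+t} then S (k + j) else d) t
      = ada_state gr 1 (\<lambda>j. S (k + j)) t" for S
    by (rule ada_state_cong) auto
  ultimately show ?thesis
    using map_Pi_pmf_ada_state_eq[of gr k t d p] by (simp add: pmf.map_comp o_def)
qed

lemma adasgd_unit_le_one: "adasgd n gr 1 S \<le> 1"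
proof -
  have "fst (ada_state gr 1 T t) \<le> 1" for T t
    by (cases t) (auto simp: Let_def proj_ball_def)
  then have "(\<Sum>t<n. fst (ada_state gr 1 (\<lambda>t. S (n + t)) t)) \<le> real n"
    using sum_mono[of "{..<n}" "\<lambda>t. fst (ada_state gr 1 (\<lambda>t. S (n + t)) t)" "\<lambda>_. 1"] by simp
  then show ?thesis unfolding adasgd_def by (cases "n = 0") (simp_all add: divide_simps)
qed

lemma expectation_adasgd_unit:
  assumes "finite (set_pmf p)"
  shows "measure_pmf.expectation (Pi_pmf {n+1..n+n} d (\<lambda>_. p)) (adasgd n gr 1)
    = (\<Sum>t<n. measure_pmf.expectation (ada_chain gr p t) fst) / n"
proof -
  let ?P = "Pi_pmf {n+1..n+n} d (\<lambda>_. p)"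
  have "finite (set_pmf ?P)" using assms by (simp add: set_Pi_pmf finite_PiE_dflt)
  note integrable = integrable_measure_pmf_finite[OF this]
  have "measure_pmf.expectation ?P (adasgd n gr 1)
      = measure_pmf.expectation ?P (\<lambda>S. \<Sum>t<n. fst (ada_state gr 1 (\<lambda>j. S (n + j)) t)) / n"
    unfolding adasgd_def by simp
  also have "\<dots> = (\<Sum>t<n. measure_pmf.expectation ?P (\<lambda>S. fst (ada_state gr 1 (\<lambda>j. S (n + j)) t))) / n"
    by (subst Bochner_Integration.integral_sum) (rule integrable, rule refl)
  also have "\<dots> = (\<Sum>t<n. measure_pmf.expectation (ada_chain gr p t) fst) / n"
  proof (intro arg_cong[where f = "\<lambda>x. x / n"] sum.cong refl)
    fix t assume "t \<in> {..<n}"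
    then have "map_pmf (\<lambda>S. ada_state gr 1 (\<lambda>j. S (n + j)) t) ?P = ada_chain gr p t"
      by (intro map_Pi_pmf_ada_state) simp
    then show "measure_pmf.expectation ?P (\<lambda>S. fst (ada_state gr 1 (\<lambda>j. S (n + j)) t))
        = measure_pmf.expectation (ada_chain gr p t) fst"
      by (metis integral_map_pmf)
  qed
  finally show ?thesis .
qed

lemma expectation_le_prob_ge:
  fixes P :: "'a pmf" and X :: "'a \<Rightarrow> real"
  assumes "finite (set_pmf P)" "\<And>x. X x \<le> 1" "0 \<le> a"
  shows "measure_pmf.expectation P X \<le> a + measure_pmf.prob P {x. a \<le> X x}"
proof -
  have "X x \<le> a + indicator {x. a \<le> X x} x" for x
    using assms(2)[of x] assms(3) by (cases "a \<le> X x") auto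
  then have "measure_pmf.expectation P X \<le> measure_pmf.expectation P (\<lambda>x. a + indicator {x. a \<le> X x} x)"
    by (intro integral_mono integrable_measure_pmf_finite[OF assms(1)])
  then show ?thesis by (simp add: integrable_measure_pmf_finite[OF assms(1)])
qed

lemma prob_adasgd_unit_ge:
  fixes n :: nat
  assumes gr: "is_hard_subgradient gr" and n: "3000 \<le> n"
  defines "\<epsilon> \<equiv> 1 / (10 * sqrt n)"
  shows "1/16 \<le> measure_pmf.prob (Pi_pmf {n+1..n+n} d (\<lambda>_. bit_pmf ((1 - \<epsilon>)/2)))
    {S. 5/144 \<le> adasgd n gr 1 S}"
proof -
  let ?P = "Pi_pmf {n+1..n+n} d (\<lambda>_. bit_pmf ((1 - \<epsilon>)/2))"
  have "7/72 \<le> (\<Sum>t<n. measure_pmf.expectation (ada_chain gr (bit_pmf ((1 - \<epsilon>)/2)) t) fst) / n"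
    using sum_expected_iterate_ge[OF gr n] n by (simp add: \<epsilon>_def divide_simps)
  also have "\<dots> = measure_pmf.expectation ?P (adasgd n gr 1)"
    by (rule expectation_adasgd_unit[OF finite_set_pmf_bit_pmf, symmetric])
  also have "\<dots> \<le> 5/144 + measure_pmf.prob ?P {S. 5/144 \<le> adasgd n gr 1 S}"
    by (intro expectation_le_prob_ge adasgd_unit_le_one)
      (simp_all add: set_Pi_pmf finite_PiE_dflt finite_set_pmf_bit_pmf)
  finally show ?thesis by simp
qed

section \<open>Majority of the validation samples\<close>

lemma binomial_le_two_power_pred:
  assumes "0 < m" "m < n"
  shows "n choose m \<le> 2 ^ (n - 1)"
proof -
  obtain n' m' where n': "n = Suc n'" and m': "m = Suc m'" using assms by (cases n; cases m) auto
  have "n choose m = (\<Sum>i\<in>{m', Suc m'}. n' choose i)" by (simp add: n' m')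
  also have "\<dots> \<le> (\<Sum>i\<le>n'. n' choose i)" using assms n' m' by (intro sum_mono2) auto
  also have "\<dots> = 2 ^ (n - 1)" by (simp add: choose_row_sum n')
  finally show ?thesis .
qed

lemma pmf_binomial_center_le:
  assumes "0 < m" "0 \<le> q" "q \<le> 1"
  shows "pmf (binomial_pmf (2 * m) q) m \<le> 1/2"
proof -
  have "q * (1 - q) \<le> 1/4" using zero_le_power2[of "q - 1/2"] by (simp add: power2_eq_square algebra_simps)
  have "pmf (binomial_pmf (2 * m) q) m = real (2 * m choose m) * (q * (1 - q)) ^ m"
    using assms by (simp add: power_mult_distrib mult_2)
  also have "\<dots> \<le> 2 ^ (2 * m - 1) * (1/4) ^ m"
    using binomial_le_two_power_pred[of m "2 * m"] assms \<open>q * (1 - q) \<le> 1/4\<close>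
    by (intro mult_mono power_mono) (simp_all flip: of_nat_le_iff)
  also have "\<dots> = 1/2"
    using assms(1) by (cases m) (simp_all add: power_mult power_divide)
  finally show ?thesis .
qed

lemma pmf_binomial_mirror:
  assumes "2 * j \<le> n" "0 \<le> q" "q \<le> 1"
  shows "pmf (binomial_pmf n q) (n - j) * (1 - q) ^ (n - 2 * j) = q ^ (n - 2 * j) * pmf (binomial_pmf n q) j"
proof -
  define m where "m = n - 2 * j"
  have "n - j = m + j" "n - (n - j) = j" using assms by (simp_all add: m_def)
  moreover have "n choose (n - j) = n choose j" using assms binomial_symmetric[of j n] by simp
  ultimately have "pmf (binomial_pmf n q) (n - j) = real (n choose j) * q ^ (m + j) * (1 - q) ^ j"
    "pmf (binomial_pmf n q) j = real (n choose j) * q ^ j * (1 - q) ^ (m + j)"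
    using assms by (simp_all only: pmf_binomial)
  then show ?thesis unfolding m_def[symmetric] by (simp add: power_add mult_ac)
qed

lemma pmf_binomial_mirror_ge:
  assumes "2 * j \<le> n" "0 \<le> \<epsilon>" "\<epsilon> \<le> 1/2"
  shows "(1 - 2 * \<epsilon> * real (n - 2 * j)) * pmf (binomial_pmf n ((1 - \<epsilon>)/2)) j
    \<le> pmf (binomial_pmf n ((1 - \<epsilon>)/2)) (n - j)"
proof -
  define q where "q = (1 - \<epsilon>)/2"
  define m where "m = n - 2 * j"
  have q: "0 \<le> q" "q \<le> 1" "0 < 1 - q" using assms by (simp_all add: q_def)
  have "(1 - 2 * \<epsilon>) * (1 - q) = q - \<epsilon>^2" by (simp add: q_def field_simps power2_eq_square)
  then have "(1 - 2 * \<epsilon>) * (1 - q) \<le> q" by simp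
  have "1 - 2 * \<epsilon> * m \<le> (1 - 2 * \<epsilon>) ^ m"
    using Bernoulli_inequality[of "- 2 * \<epsilon>" m] assms by (simp add: mult_ac)
  then have "(1 - 2 * \<epsilon> * m) * pmf (binomial_pmf n q) j * (1 - q) ^ m
      \<le> (1 - 2 * \<epsilon>) ^ m * pmf (binomial_pmf n q) j * (1 - q) ^ m"
    using q by (intro mult_right_mono) simp_all
  also have "\<dots> = ((1 - 2 * \<epsilon>) * (1 - q)) ^ m * pmf (binomial_pmf n q) j"
    by (simp add: power_mult_distrib mult_ac)
  also have "\<dots> \<le> q ^ m * pmf (binomial_pmf n q) j"
    using \<open>(1 - 2 * \<epsilon>) * (1 - q) \<le> q\<close> assms q by (intro mult_right_mono power_mono) auto
  also have "\<dots> = pmf (binomial_pmf n q) (n - j) * (1 - q) ^ m"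
    unfolding m_def using pmf_binomial_mirror[OF assms(1) q(1,2)] by simp
  finally show ?thesis using q(3) unfolding q_def[symmetric] m_def[symmetric] by simp
qed

lemma binomial_lower_tail_le:
  fixes n :: nat
  assumes "0 < n"
  defines "\<epsilon> \<equiv> 1 / (10 * sqrt n)"
  shows "measure_pmf.prob (binomial_pmf n ((1 - \<epsilon>)/2)) {k. 2 * real k + 3 * sqrt n < n} \<le> 1/5"
proof -
  define r where "r = sqrt n"
  define \<delta> where "\<delta> = 29/20 * r"
  have r: "1 \<le> r" "r^2 = n" "\<epsilon> * r = 1/10" using assms by (simp_all add: r_def \<epsilon>_def)
  have \<delta>_sq: "\<delta>^2 = 841/400 * n" unfolding \<delta>_def power_mult_distrib r(2) by (simp add: power2_eq_square)
  have "0 \<le> \<epsilon>" "\<epsilon> \<le> 1" using r by (simp_all add: \<epsilon>_def r_def[symmetric] divide_simps)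
  interpret binomial_distribution n "(1 - \<epsilon>)/2"
    using \<open>0 \<le> \<epsilon>\<close> \<open>\<epsilon> \<le> 1\<close> by unfold_locales simp
  have "\<epsilon> * n = r/10"
    unfolding \<epsilon>_def r_def[symmetric] using r(1) by (simp add: r(2)[symmetric] power2_eq_square)
  moreover have "n * ((1 - \<epsilon>)/2) - \<delta> = n/2 - (\<epsilon> * n)/2 - \<delta>" by (simp add: field_simps)
  ultimately have "n * ((1 - \<epsilon>)/2) - \<delta> = n/2 - 3/2 * r" unfolding \<delta>_def by linarith
  then have "{k. 2 * real k + 3 * sqrt n < n} \<subseteq> {k. k \<le> n * ((1 - \<epsilon>)/2) - \<delta>}"
    by (auto simp: r_def)
  then have "measure_pmf.prob (binomial_pmf n ((1 - \<epsilon>)/2)) {k. 2 * real k + 3 * sqrt n < n}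
      \<le> measure_pmf.prob (binomial_pmf n ((1 - \<epsilon>)/2)) {k. k \<le> n * ((1 - \<epsilon>)/2) - \<delta>}"
    by (rule measure_pmf.finite_measure_mono) simp
  also have "\<dots> \<le> exp (- 2 * \<delta>^2 / n)" using r assms by (intro prob_le) (simp_all add: \<delta>_def)
  also have "- 2 * \<delta>^2 / n = - (841/200)" using assms unfolding \<delta>_sq by simp
  also have "exp (- (841/200)) \<le> (1/5 :: real)"
    using exp_ge_add_one_self[of "841/200 :: real"] by (simp add: exp_minus divide_simps)
  finally show ?thesis .
qed

lemma prob_binomial_tie_le:
  assumes "0 < n" "0 \<le> q" "q \<le> 1"
  shows "measure_pmf.prob (binomial_pmf n q) {k. 2 * k = n} \<le> 1/2"
proof (cases "even n")
  case True
  then obtain m where m: "n = 2 * m" "0 < m" using assms(1) by (auto elim: evenE)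
  then have "{k. 2 * k = n} = {m}" by auto
  then show ?thesis using pmf_binomial_center_le[of m] m assms by (simp add: measure_pmf_single)
next
  case False
  then have "{k. 2 * k = n} = {}" by auto
  then show ?thesis by simp
qed

lemma prob_binomial_near_ties_mirror:
  fixes n :: nat
  assumes "0 < n"
  defines "\<epsilon> \<equiv> 1 / (10 * sqrt n)"
  shows "2/5 * measure_pmf.prob (binomial_pmf n ((1 - \<epsilon>)/2)) {j. 2 * j < n \<and> n \<le> 2 * real j + 3 * sqrt n}
    \<le> measure_pmf.prob (binomial_pmf n ((1 - \<epsilon>)/2)) {k. n < 2 * k}"
proof -
  let ?B = "binomial_pmf n ((1 - \<epsilon>)/2)"
  define K where "K = {j. 2 * j < n \<and> n \<le> 2 * real j + 3 * sqrt n}"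
  have "1 \<le> sqrt n" using assms by simp
  then have \<epsilon>: "0 \<le> \<epsilon>" "\<epsilon> \<le> 1/2" "\<epsilon> * sqrt n = 1/10"
    using assms by (simp_all add: \<epsilon>_def divide_simps del: real_sqrt_ge_1_iff)
  have "finite K" by (rule finite_subset[of _ "{..n}"]) (auto simp: K_def)
  have "2/5 * pmf ?B j \<le> pmf ?B (n - j)" if "j \<in> K" for j
  proof -
    have "real (n - 2 * j) \<le> 3 * sqrt n" using that by (auto simp: K_def)
    then have "\<epsilon> * real (n - 2 * j) \<le> \<epsilon> * (3 * sqrt n)" using \<epsilon> by (intro mult_left_mono) auto
    then have "2/5 * pmf ?B j \<le> (1 - 2 * \<epsilon> * real (n - 2 * j)) * pmf ?B j"
      using \<epsilon> by (intro mult_right_mono) auto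
    also have "\<dots> \<le> pmf ?B (n - j)" using that \<epsilon> by (intro pmf_binomial_mirror_ge) (auto simp: K_def)
    finally show ?thesis .
  qed
  then have "2/5 * measure_pmf.prob ?B K \<le> (\<Sum>j\<in>K. pmf ?B (n - j))"
    using \<open>finite K\<close> by (simp add: measure_measure_pmf_finite sum_distrib_left sum_mono)
  also have "\<dots> = measure_pmf.prob ?B ((\<lambda>j. n - j) ` K)"
  proof -
    have "inj_on (\<lambda>j. n - j) K" by (auto simp: inj_on_def K_def)
    then show ?thesis using \<open>finite K\<close> by (simp add: measure_measure_pmf_finite sum.reindex)
  qed
  also have "\<dots> \<le> measure_pmf.prob ?B {k. n < 2 * k}"
    by (rule measure_pmf.finite_measure_mono) (auto simp: K_def)
  finally show ?thesis unfolding K_def .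
qed

text \<open>The mirror \<open>j \<mapsto> n - j\<close> sends the near-ties below \<open>n/2\<close> into the majority at the cost
  of a factor \<open>2/5\<close>; Hoeffding's inequality bounds the remaining lower tail.\<close>
lemma binomial_majority_prob_ge:
  fixes n :: nat
  assumes n: "3000 \<le> n"
  defines "\<epsilon> \<equiv> 1 / (10 * sqrt n)"
  shows "3/35 \<le> measure_pmf.prob (binomial_pmf n ((1 - \<epsilon>)/2)) {k. n < 2 * k}"
proof -
  let ?P = "measure_pmf.prob (binomial_pmf n ((1 - \<epsilon>)/2))"
  let ?near = "{j. 2 * j < n \<and> n \<le> 2 * real j + 3 * sqrt n}"
  let ?tail = "{k. 2 * real k + 3 * sqrt n < n}"
  have "1 \<le> sqrt n" using n by simp
  then have "0 \<le> \<epsilon>" "\<epsilon> \<le> 1" by (simp_all add: \<epsilon>_def divide_simps del: real_sqrt_ge_1_iff)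
  have "{k. n < 2 * k} \<union> {k. 2 * k \<le> n} = UNIV" "{k. n < 2 * k} \<inter> {k. 2 * k \<le> n} = {}" by auto
  then have "?P {k. n < 2 * k} + ?P {k. 2 * k \<le> n} = 1"
    using measure_pmf.finite_measure_Union[of "{k. n < 2 * k}" "binomial_pmf n ((1 - \<epsilon>)/2)" "{k. 2 * k \<le> n}"]
    by auto
  moreover have "?P {k. 2 * k \<le> n} \<le> ?P (?near \<union> ?tail \<union> {k. 2 * k = n})"
    by (rule measure_pmf.finite_measure_mono) auto
  moreover have "?P (?near \<union> ?tail \<union> {k. 2 * k = n}) \<le> ?P (?near \<union> ?tail) + ?P {k. 2 * k = n}"
    by (rule measure_Un_le) simp_all
  moreover have "?P (?near \<union> ?tail) \<le> ?P ?near + ?P ?tail" by (rule measure_Un_le) simp_all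
  moreover have "2/5 * ?P ?near \<le> ?P {k. n < 2 * k}"
    using prob_binomial_near_ties_mirror[of n] n unfolding \<epsilon>_def by simp
  moreover have "?P ?tail \<le> 1/5" using binomial_lower_tail_le[of n] n unfolding \<epsilon>_def by simp
  moreover have "?P {k. 2 * k = n} \<le> 1/2" using prob_binomial_tie_le[of n] n \<open>0 \<le> \<epsilon>\<close> \<open>\<epsilon> \<le> 1\<close> by simp
  ultimately show ?thesis by linarith
qed

lemma prob_majority_bit_pmf:
  assumes "0 \<le> q" "q \<le> 1"
  shows "measure_pmf.prob (Pi_pmf {1..n} d (\<lambda>_. bit_pmf q)) {S. n < 2 * card {i\<in>{1..n}. S i = 1}}
    = measure_pmf.prob (binomial_pmf n q) {k. n < 2 * k}"
proof -
  define \<phi> where "\<phi> b = (if b then 1 else 0 :: real)" for b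
  have "Pi_pmf {1..n} d (\<lambda>_. bit_pmf q)
      = map_pmf (\<lambda>S i. if i \<in> {1..n} then S i else d) (Pi_pmf {1..n} 0 (\<lambda>_. map_pmf \<phi> (bernoulli_pmf q)))"
    unfolding Pi_pmf_default_swap[OF finite_atLeastAtMost] bit_pmf_def \<phi>_def[abs_def] ..
  also have "Pi_pmf {1..n} 0 (\<lambda>_. map_pmf \<phi> (bernoulli_pmf q))
      = map_pmf (\<lambda>h. \<phi> \<circ> h) (Pi_pmf {1..n} False (\<lambda>_. bernoulli_pmf q))"
    by (rule Pi_pmf_map) (simp_all add: \<phi>_def)
  finally have Pi: "Pi_pmf {1..n} d (\<lambda>_. bit_pmf q) = map_pmf (\<lambda>h i. if i \<in> {1..n} then \<phi> (h i) else d)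
      (Pi_pmf {1..n} False (\<lambda>_. bernoulli_pmf q))"
    by (simp add: pmf.map_comp o_def)
  have card_eq: "card {i\<in>{1..n}. (if i \<in> {1..n} then \<phi> (h i) else d) = 1} = card {i\<in>{1..n}. h i}" for h
    by (intro arg_cong[where f = card]) (auto simp: \<phi>_def)
  have "map_pmf (\<lambda>S. card {i\<in>{1..n}. S i = 1}) (Pi_pmf {1..n} d (\<lambda>_. bit_pmf q))
      = map_pmf (\<lambda>h. card {i\<in>{1..n}. h i}) (Pi_pmf {1..n} False (\<lambda>_. bernoulli_pmf q))"
    unfolding Pi pmf.map_comp o_def card_eq ..
  also have "\<dots> = binomial_pmf n q"
    using assms by (intro binomial_pmf_altdef'[symmetric]) auto
  finally have "map_pmf (\<lambda>S. card {i\<in>{1..n}. S i = 1}) (Pi_pmf {1..n} d (\<lambda>_. bit_pmf q)) = binomial_pmf n q" .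
  from this[symmetric] show ?thesis unfolding measure_map_pmf by (simp add: vimage_def)
qed

section \<open>Independence of validation and training samples\<close>

lemma measure_PiM_pmf_finite:
  fixes I :: "'i set" and p :: "'a pmf" and E :: "('i \<Rightarrow> 'a) set"
  assumes I: "finite I" and E: "finite E" "E \<subseteq> extensional I"
  shows "E \<in> sets (PiM I (\<lambda>_. measure_pmf p))"
    and "measure (PiM I (\<lambda>_. measure_pmf p)) E = measure_pmf.prob (Pi_pmf I undefined (\<lambda>_. p)) E"
proof -
  interpret product_sigma_finite "\<lambda>_. measure_pmf p" by unfold_locales
  have singleton: "{\<sigma>} = PiE I (\<lambda>i. {\<sigma> i})" if "\<sigma> \<in> E" for \<sigma>
    using that E(2) PiE_singleton by blast
  have sets: "{\<sigma>} \<in> sets (PiM I (\<lambda>_. measure_pmf p))" if "\<sigma> \<in> E" for \<sigma>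
    unfolding singleton[OF that] by (rule sets_PiM_I_finite[OF I]) auto
  have "E = (\<Union>\<sigma>\<in>E. {\<sigma>})" by auto
  also have "\<dots> \<in> sets (PiM I (\<lambda>_. measure_pmf p))" using E(1) sets by blast
  finally show "E \<in> sets (PiM I (\<lambda>_. measure_pmf p))" .
  have "emeasure (PiM I (\<lambda>_. measure_pmf p)) {\<sigma>} = pmf (Pi_pmf I undefined (\<lambda>_. p)) \<sigma>"
    if "\<sigma> \<in> E" for \<sigma>
  proof -
    have "emeasure (PiM I (\<lambda>_. measure_pmf p)) (PiE I (\<lambda>i. {\<sigma> i}))
        = (\<Prod>i\<in>I. emeasure (measure_pmf p) {\<sigma> i})"
      by (rule emeasure_PiM[OF I]) simp
    then have "emeasure (PiM I (\<lambda>_. measure_pmf p)) {\<sigma>} = (\<Prod>i\<in>I. ennreal (pmf p (\<sigma> i)))"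
      unfolding singleton[OF that, symmetric] emeasure_pmf_single .
    also have "\<dots> = pmf (Pi_pmf I undefined (\<lambda>_. p)) \<sigma>"
      using that E(2) I by (subst pmf_Pi') (auto simp: prod_ennreal extensional_def)
    finally show ?thesis .
  qed
  then have "emeasure (PiM I (\<lambda>_. measure_pmf p)) E = (\<Sum>\<sigma>\<in>E. ennreal (pmf (Pi_pmf I undefined (\<lambda>_. p)) \<sigma>))"
    using emeasure_eq_sum_singleton[OF E(1) sets] by simp
  also have "\<dots> = emeasure (measure_pmf (Pi_pmf I undefined (\<lambda>_. p))) E"
    using E(1) by (simp add: emeasure_measure_pmf_finite)
  finally show "measure (PiM I (\<lambda>_. measure_pmf p)) E = measure_pmf.prob (Pi_pmf I undefined (\<lambda>_. p)) E"
    by (simp add: measure_def)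
qed

lemma prob_Pi_pmf_split:
  fixes n :: nat and p :: "'a pmf" and V W :: "(nat \<Rightarrow> 'a) \<Rightarrow> bool"
  assumes V: "\<And>f g. V (\<lambda>i. if i \<in> {1..n} then f i else g i) = V f"
      and W: "\<And>f g. W (\<lambda>i. if i \<in> {1..n} then f i else g i) = W g"
  shows "measure_pmf.prob (Pi_pmf {1..2*n} d (\<lambda>_. p)) {S. V S \<and> W S}
    = measure_pmf.prob (Pi_pmf {1..n} d (\<lambda>_. p)) {S. V S} * measure_pmf.prob (Pi_pmf {n+1..n+n} d (\<lambda>_. p)) {S. W S}"
proof -
  let ?P1 = "Pi_pmf {1..n} d (\<lambda>_. p)" and ?P2 = "Pi_pmf {n+1..n+n} d (\<lambda>_. p)"
  let ?glue = "\<lambda>(f, g) i. if i \<in> {1..n} then f i else g i"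
  have "{1..2*n} = {1..n} \<union> {n+1..n+n}" by auto
  then have "Pi_pmf {1..2*n} d (\<lambda>_. p) = map_pmf ?glue (pair_pmf ?P1 ?P2)"
    by (simp add: Pi_pmf_union)
  moreover have "?glue -` {S. V S \<and> W S} = {f. V f} \<times> {g. W g}" using V W by auto
  ultimately have "measure_pmf.prob (Pi_pmf {1..2*n} d (\<lambda>_. p)) {S. V S \<and> W S}
      = measure_pmf.prob (pair_pmf ?P1 ?P2) ({f. V f} \<times> {g. W g})"
    by simp
  also have "\<dots> = measure_pmf.prob (pair_pmf ?P1 ?P2) ({f. V f} \<times> {g. W g} \<inter> set_pmf (pair_pmf ?P1 ?P2))"
    by (rule measure_Int_set_pmf[symmetric])
  \<comment> \<open>restricting to the supports makes both factors countable\<close>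
  also have "{f. V f} \<times> {g. W g} \<inter> set_pmf (pair_pmf ?P1 ?P2)
      = ({f. V f} \<inter> set_pmf ?P1) \<times> ({g. W g} \<inter> set_pmf ?P2)"
    by (auto simp: set_pair_pmf)
  also have "measure_pmf.prob (pair_pmf ?P1 ?P2) \<dots> = measure_pmf.prob ?P1 {f. V f} * measure_pmf.prob ?P2 {g. W g}"
    by (subst measure_pmf_prob_product) (simp_all add: measure_Int_set_pmf)
  finally show ?thesis .
qed

section \<open>Greedy selection on the hard instance\<close>

lemma hard_subgradient_scale:
  assumes "is_hard_subgradient gr" "0 < R"
  shows "gr (R * u) s = gr u s"
proof (cases "s = 1 \<or> u = 0")
  case True
  then show ?thesis using hard_subgradient_one[OF assms(1)] by auto
next
  case False
  then show ?thesis using hard_subgradient_sgn[OF assms(1)] assms(2) by (simp add: sgn_mult)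
qed

lemma proj_ball_scale: "0 < R \<Longrightarrow> proj_ball R (R * w) = R * proj_ball 1 w"
  by (simp add: proj_ball_def max_mult_distrib_left min_mult_distrib_left)

lemma ada_state_scale:
  assumes gr: "is_hard_subgradient gr" and R: "0 < R"
  shows "ada_state gr R T t = (R * fst (ada_state gr 1 T t), snd (ada_state gr 1 T t))"
proof (induction t)
  case (Suc t)
  obtain u G where uG: "ada_state gr 1 T t = (u, G)" by fastforce
  define g where "g = gr u (T (Suc t))"
  have "gr (R * u) (T (Suc t)) = g" unfolding g_def by (rule hard_subgradient_scale[OF gr R])
  moreover have "R * u - R * g / sqrt (G + g^2) = R * (u - g / sqrt (G + g^2))" by (simp add: algebra_simps)
  ultimately show ?case using Suc uG proj_ball_scale[OF R] by (simp add: Let_def g_def)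
qed simp

lemma adasgd_scale:
  assumes "is_hard_subgradient gr" "0 < R"
  shows "adasgd n gr R S = R * adasgd n gr 1 S"
  unfolding adasgd_def by (simp add: ada_state_scale[OF assms] sum_distrib_left)

lemma val_risk_hard_loss:
  assumes "0 \<le> x"
  shows "val_risk n hard_loss S x = x * (real n - 2 * card {i\<in>{1..n}. S i = 1}) / n"
proof -
  define B where "B = {i\<in>{1..n}. S i = 1}"
  have B: "B \<subseteq> {1..n}" "finite B" by (auto simp: B_def)
  then have "card B \<le> n" using card_mono[OF finite_atLeastAtMost B(1)] by simp
  have "(\<Sum>i=1..n. hard_loss x (S i)) = (\<Sum>i\<in>B. - x) + (\<Sum>i\<in>{1..n} - B. x)"
    using B assms by (simp add: sum.subset_diff[of B] hard_loss_def B_def)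
  also have "\<dots> = x * (real n - 2 * card B)"
    using B \<open>card B \<le> n\<close> by (simp add: card_Diff_subset of_nat_diff algebra_simps)
  finally show ?thesis by (simp add: val_risk_def B_def)
qed

lemma Max_eq_of_greedy:
  fixes \<eta> :: "nat \<Rightarrow> real"
  assumes "v < 0" "k \<le> K" "\<forall>k'\<le>K. \<eta> k * v \<le> \<eta> k' * v"
  shows "Max (\<eta> ` {0..K}) = \<eta> k"
  using assms by (intro Max_eqI) (auto simp: mult_le_cancel_right)

lemma excess_risk_of_greedy:
  fixes n K :: nat and \<eta> :: "nat \<Rightarrow> real"
  assumes gr: "is_hard_subgradient gr" and \<eta>: "\<forall>k\<le>K. 0 < \<eta> k" and k: "k \<le> K"
    and majority: "n < 2 * card {i\<in>{1..n}. S i = 1}" and c: "5/144 \<le> adasgd n gr 1 S"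
    and greedy: "\<forall>k'\<le>K. val_risk n hard_loss S (adasgd n gr (\<eta> k) S)
                       \<le> val_risk n hard_loss S (adasgd n gr (\<eta> k') S)"
  defines "D \<equiv> measure_pmf (bit_pmf ((1 - 1 / (10 * sqrt n))/2))"
  shows "Max (\<eta> ` {0..K}) / (288 * sqrt n)
    \<le> pop_risk D hard_loss (adasgd n gr (\<eta> k) S) - (INF x. pop_risk D hard_loss x)"
proof -
  define \<epsilon> where "\<epsilon> = 1 / (10 * sqrt n)"
  define c where "c = adasgd n gr 1 S"
  define v where "v = val_risk n hard_loss S c"
  have "card {i\<in>{1..n}. S i = 1} \<le> card {1..n}" by (intro card_mono) auto
  then have "card {i\<in>{1..n}. S i = 1} \<le> n" by simp
  then have "0 < n" using majority by linarith
  then have "1 \<le> sqrt n" by simp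
  then have \<epsilon>: "0 < \<epsilon>" "\<epsilon> \<le> 1"
    unfolding \<epsilon>_def using \<open>0 < n\<close> by (simp_all add: divide_simps del: real_sqrt_ge_1_iff)
  have "0 < c" using c by (simp add: c_def)
  have x: "adasgd n gr (\<eta> k') S = \<eta> k' * c" if "k' \<le> K" for k'
    using \<eta> that by (simp add: c_def adasgd_scale[OF gr, of "\<eta> k'"])
  have "v < 0"
    using val_risk_hard_loss[of c] \<open>0 < c\<close> \<open>0 < n\<close> majority
    by (simp add: v_def mult_pos_neg divide_neg_pos)
  have "val_risk n hard_loss S (\<eta> k' * c) = \<eta> k' * v" if "k' \<le> K" for k'
  proof -
    have "0 \<le> \<eta> k' * c" using \<eta> that \<open>0 < c\<close> by (simp add: less_imp_le)
    then show ?thesis using \<open>0 < c\<close> by (simp add: v_def val_risk_hard_loss)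
  qed
  then have "Max (\<eta> ` {0..K}) = \<eta> k"
    using \<open>v < 0\<close> k greedy x by (intro Max_eq_of_greedy) auto
  then have "Max (\<eta> ` {0..K}) / (288 * sqrt n) = \<epsilon> * (\<eta> k * (5/144))" by (simp add: \<epsilon>_def)
  also have "\<dots> \<le> \<epsilon> * (\<eta> k * c)" using \<epsilon> \<eta> k c by (simp add: c_def)
  also have "\<dots> = pop_risk D hard_loss (adasgd n gr (\<eta> k) S)"
    using \<epsilon> \<eta> k \<open>0 < c\<close> x[OF k] by (simp add: D_def \<epsilon>_def[symmetric] pop_risk_hard_loss less_imp_le)
  finally show ?thesis
    using INF_pop_risk_hard_loss[of \<epsilon>] \<epsilon> by (simp add: D_def \<epsilon>_def[symmetric])
qed

lemma prob_good_samples: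
  fixes n :: nat
  assumes gr: "is_hard_subgradient gr" and n: "3000 \<le> n"
  defines "D \<equiv> measure_pmf (bit_pmf ((1 - 1 / (10 * sqrt n))/2))"
    and "E \<equiv> {S \<in> PiE {1..2*n} (\<lambda>_. {0, 1}).
              n < 2 * card {i\<in>{1..n}. S i = 1} \<and> 5/144 \<le> adasgd n gr 1 S}"
  shows "E \<in> sets (PiM {1..2*n} (\<lambda>_. D))" and "1/1000 \<le> measure (PiM {1..2*n} (\<lambda>_. D)) E"
proof -
  define q where "q = (1 - 1 / (10 * sqrt n))/2"
  have "1 \<le> sqrt n" using n by simp
  then have q: "0 \<le> q" "q \<le> 1" by (simp_all add: q_def divide_simps del: real_sqrt_ge_1_iff)
  let ?P = "\<lambda>A. Pi_pmf A undefined (\<lambda>_. bit_pmf q)"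
  let ?V = "\<lambda>S. n < 2 * card {i\<in>{1..n}. S i = 1}" and ?W = "\<lambda>S. 5/144 \<le> adasgd n gr 1 S"
  have "finite E"
    by (rule finite_subset[of _ "PiE {1..2*n} (\<lambda>_. {0::real, 1})"]) (auto simp: E_def intro: finite_PiE)
  moreover have "E \<subseteq> extensional {1..2*n}" by (auto simp: E_def PiE_def)
  ultimately have "E \<in> sets (PiM {1..2*n} (\<lambda>_. D))"
    and measure_E: "measure (PiM {1..2*n} (\<lambda>_. D)) E = measure_pmf.prob (?P {1..2*n}) E"
    using measure_PiM_pmf_finite[of "{1..2*n}" E "bit_pmf q"] by (simp_all add: D_def q_def)
  then show "E \<in> sets (PiM {1..2*n} (\<lambda>_. D))" by blast
  have "set_pmf (?P {1..2*n}) \<subseteq> PiE {1..2*n} (\<lambda>_. {0, 1})"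
    using set_pmf_bit_pmf[of q] by (fastforce simp: set_Pi_pmf PiE_dflt_def PiE_def extensional_def)
  then have support: "E \<inter> set_pmf (?P {1..2*n}) = {S. ?V S \<and> ?W S} \<inter> set_pmf (?P {1..2*n})"
    by (auto simp: E_def)
  have "measure_pmf.prob (?P {1..2*n}) E = measure_pmf.prob (?P {1..2*n}) (E \<inter> set_pmf (?P {1..2*n}))"
    by (rule measure_Int_set_pmf[symmetric])
  also have "\<dots> = measure_pmf.prob (?P {1..2*n}) {S. ?V S \<and> ?W S}"
    unfolding support by (rule measure_Int_set_pmf)
  also have "\<dots> = measure_pmf.prob (?P {1..n}) {S. ?V S} * measure_pmf.prob (?P {n+1..n+n}) {S. ?W S}"
  proof (rule prob_Pi_pmf_split)
    fix f g :: "nat \<Rightarrow> real"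
    show "?V (\<lambda>i. if i \<in> {1..n} then f i else g i) = ?V f"
      by (simp cong: conj_cong)
    show "?W (\<lambda>i. if i \<in> {1..n} then f i else g i) = ?W g"
      using adasgd_training_cong[of n "\<lambda>i. if i \<in> {1..n} then f i else g i" g gr 1] by simp
  qed
  also have "\<dots> \<ge> 3/35 * (1/16)"
  proof (rule mult_mono)
    show "3/35 \<le> measure_pmf.prob (?P {1..n}) {S. ?V S}"
      unfolding prob_majority_bit_pmf[OF q] unfolding q_def by (rule binomial_majority_prob_ge[OF n])
    show "1/16 \<le> measure_pmf.prob (?P {n+1..n+n}) {S. ?W S}"
      unfolding q_def by (rule prob_adasgd_unit_ge[OF gr n])
  qed simp_all
  finally show "1/1000 \<le> measure (PiM {1..2*n} (\<lambda>_. D)) E" using measure_E by simp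
qed

theorem proposition2:
  fixes n K :: nat and eta :: "nat \<Rightarrow> real"
  assumes "n \<ge> 3000" and "\<forall>k\<le>K. eta k > 0"
  shows "\<exists>(D::real measure) (f::real \<Rightarrow> real \<Rightarrow> real).
    prob_space D \<and>
    (\<forall>s\<in>space D. convex_on UNIV (\<lambda>x. f x s)) \<and>
    (\<forall>s\<in>space D. \<forall>x y. \<bar>f x s - f y s\<bar> \<le> \<bar>x - y\<bar>) \<and>
    (\<forall>x. integrable D (f x)) \<and>
    (\<forall>x. pop_risk D f 0 \<le> pop_risk D f x) \<and>
    (\<forall>gr::real \<Rightarrow> real \<Rightarrow> real.
       (\<forall>s\<in>space D. \<forall>x y. f y s \<ge> f x s + gr x s * (y - x)) \<longrightarrow>
       (\<exists>E\<in>sets (PiM {1..2*n} (\<lambda>_. D)).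
          measure (PiM {1..2*n} (\<lambda>_. D)) E \<ge> 1/1000 \<and>
          (\<forall>S\<in>E. \<forall>k\<le>K.
             (\<forall>k'\<le>K. val_risk n f S (adasgd n gr (eta k) S) \<le> val_risk n f S (adasgd n gr (eta k') S))
             \<longrightarrow> pop_risk D f (adasgd n gr (eta k) S) - (INF x. pop_risk D f x)
                 \<ge> Max (eta ` {0..K}) / (288 * sqrt (real n)))))"
proof -
  define \<epsilon> where "\<epsilon> = 1 / (10 * sqrt n)"
  define D where "D = measure_pmf (bit_pmf ((1 - \<epsilon>)/2))"
  have "1 \<le> sqrt n" using assms(1) by simp
  then have \<epsilon>: "0 \<le> \<epsilon>" "\<epsilon> \<le> 1" by (simp_all add: \<epsilon>_def divide_simps del: real_sqrt_ge_1_iff)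
  show ?thesis
  proof (intro exI[of _ D] exI[of _ hard_loss] conjI allI impI ballI)
    show "prob_space D" unfolding D_def by (rule prob_space_measure_pmf)
    show "convex_on UNIV (\<lambda>x. hard_loss x s)" for s by (rule convex_hard_loss)
    show "\<bar>hard_loss x s - hard_loss y s\<bar> \<le> \<bar>x - y\<bar>" for x y s by (rule hard_loss_lipschitz)
    show "integrable D (hard_loss x)" for x
      unfolding D_def by (rule integrable_measure_pmf_finite[OF finite_set_pmf_bit_pmf])
    show "pop_risk D hard_loss 0 \<le> pop_risk D hard_loss x" for x
      using \<epsilon> by (simp add: D_def pop_risk_hard_loss)
  next
    fix gr assume "\<forall>s\<in>space D. \<forall>x y. hard_loss x s + gr x s * (y - x) \<le> hard_loss y s"
    then have gr: "is_hard_subgradient gr" by (simp add: is_hard_subgradient_def D_def)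
    show "\<exists>E\<in>sets (PiM {1..2*n} (\<lambda>_. D)). measure (PiM {1..2*n} (\<lambda>_. D)) E \<ge> 1/1000 \<and>
          (\<forall>S\<in>E. \<forall>k\<le>K.
             (\<forall>k'\<le>K. val_risk n hard_loss S (adasgd n gr (eta k) S) \<le> val_risk n hard_loss S (adasgd n gr (eta k') S))
             \<longrightarrow> pop_risk D hard_loss (adasgd n gr (eta k) S) - (INF x. pop_risk D hard_loss x)
                 \<ge> Max (eta ` {0..K}) / (288 * sqrt (real n)))"
      using prob_good_samples[OF gr assms(1)] excess_risk_of_greedy[OF gr assms(2)]
      unfolding D_def \<epsilon>_def by blast
  qed
qed

end
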